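(* With the height $H$ and distance $d$ on $Y_4$ described in the context, one has $$\alpha(Q,Y_4)=\alpha_{\mathrm{ess}}(Q)=2 .$$ Consequently $Y_4$ contains no locally accumulating subvariety for $Q$.
   Context: Let $Y_4$ be the smooth projective toric surface over $\mathbb{Q}$ obtained by blowing up $\mathbb{P}^1\times\mathbb{P}^1$ (coordinates $[x:y]\times[s:t]$) at the four torus-invariant points $[1:0]\times[1:0]$, $[0:1]\times[1:0]$, $[1:0]\times[0:1]$, $[0:1]\times[0:1]$; outside the exceptional divisors we keep the coordinates $[x:y]\times[s:t]$. Let $Q$ be the point lying over $[1:1]\times[1:1]$. For a rational point $P=[x:y]\times[s:t]$ off the exceptional divisors, written with integers satisfying $\gcd(x,y)=\gcd(s,t)=1$, the anticanonical Weil height is $$H(P)=\frac{\max(|x^2st|,|y^2st|,|t^2xy|,|s^2xy|)}{\gcd(x,s)\gcd(x,t)\gcd(y,s)\gcd(y,t)}.$$ Near $Q$ use affine coordinates $(w,z)=(y/x,t/s)$, the local diffeomorphism $\rho(P)=(w-1,z-1)\in\mathbb{R}^2$ and the distance $d(P)=\max(|w-1|,|z-1|)$. For a constructible subset $V\subset Y_4$, the approximation constant $\alpha(Q,V)$ is the supremum of the $\gamma>0$ for which there exists $C>0$ with $d(P)^\gamma H(P)\ge C$ for all $P\in V(\mathbb{Q})$, $P\neq Q$ (equivalently the infimum of the $\gamma>0$ for which there is a sequence $P_i\in V(\mathbb{Q})$ with $d(P_i)\to0$ and $d(P_i)^\gamma H(P_i)$ bounded). The essential constant is $\alpha_{\mathrm{ess}}(Q)=\sup_V\alpha(Q,V)$,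 $V$ ranging over dense Zariski open subsets of $Y_4$. A subvariety $Z$ is locally accumulating if $\alpha(Q,W)<\alpha_{\mathrm{ess}}(Q)$ for every dense open $W\subset Z$. *)

theory Defs
  imports "HOL-Analysis.Analysis" "HOL-Computational_Algebra.Polynomial"
begin

text \<open>Rational points of Y_4 in the affine chart x \<noteq> 0, s \<noteq> 0 near Q,
  written in the coordinates (w,z) = (y/x, t/s), off the exceptional divisor
  over [1:0]x[1:0], i.e. (w,z) \<noteq> (0,0).\<close>

definition chart_pts :: "(rat \<times> rat) set" where
  "chart_pts = {p. p \<noteq> (0, 0)}"

definition Qpt :: "rat \<times> rat" where
  "Qpt = (1, 1)"

text \<open>Coprime integer coordinates: w = y/x and z = t/s in lowest terms.\<close>
definition cx :: "rat \<Rightarrow> int" where "cx w = snd (quotient_of w)"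
definition cy :: "rat \<Rightarrow> int" where "cy w = fst (quotient_of w)"

definition height :: "rat \<times> rat \<Rightarrow> real" where
  "height p = (let x = cx (fst p); y = cy (fst p); s = cx (snd p); t = cy (snd p) in
     real_of_int (max (max (abs (x^2 * s*t)) (abs (y^2 * s*t))) (max (abs (t^2 * x*y)) (abs (s^2 * x*y))))
     / real_of_int (gcd x s * gcd x t * gcd y s * gcd y t))"

definition distQ :: "rat \<times> rat \<Rightarrow> real" where
  "distQ p = max \<bar>real_of_rat (fst p) - 1\<bar> \<bar>real_of_rat (snd p) - 1\<bar>"

definition alpha :: "(rat \<times> rat) set \<Rightarrow> ereal" where
  "alpha V = Inf (ereal ` {\<gamma>::real. \<gamma> > 0 \<and>
      (\<exists>P :: nat \<Rightarrow> rat \<times> rat. (\<forall>i. P i \<in> V \<and> P i \<in> chart_pts \<and> P i \<noteq> Qpt) \<and>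
         ((\<lambda>i. distQ (P i)) \<longlonglongrightarrow> 0) \<and>
         (\<exists>B. \<forall>i. distQ (P i) powr \<gamma> * height (P i) \<le> B))})"

definition eval2 :: "rat poly poly \<Rightarrow> rat \<times> rat \<Rightarrow> rat" where
  "eval2 f p = poly (poly f [:snd p:]) (fst p)"

text \<open>Dense Zariski open subsets of Y_4 (restricted to the chart) contain a set
  of the form {f \<noteq> 0} with f a nonzero polynomial, and conversely.\<close>
definition alpha_ess :: ereal where
  "alpha_ess = (SUP f \<in> {f :: rat poly poly. f \<noteq> 0}.
       alpha {p \<in> chart_pts. eval2 f p \<noteq> 0})"

definition zclosed :: "(rat \<times> rat) set \<Rightarrow> bool" where
  "zclosed A \<longleftrightarrow> (\<exists>S :: rat poly poly set. A = {p \<in> chart_pts. \<forall>f\<in>S. eval2 f p = 0})"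

definition zopen :: "(rat \<times> rat) set \<Rightarrow> bool" where
  "zopen U \<longleftrightarrow> U \<subseteq> chart_pts \<and> zclosed (chart_pts - U)"

definition subvariety :: "(rat \<times> rat) set \<Rightarrow> bool" where
  "subvariety Z \<longleftrightarrow> zclosed Z \<and> Z \<noteq> {} \<and>
     (\<forall>A B. zclosed A \<and> zclosed B \<and> Z = A \<union> B \<longrightarrow> Z = A \<or> Z = B)"

definition dense_open_in :: "(rat \<times> rat) set \<Rightarrow> (rat \<times> rat) set \<Rightarrow> bool" where
  "dense_open_in W Z \<longleftrightarrow> (\<exists>U. zopen U \<and> W = Z \<inter> U) \<and>
     (\<forall>C. zclosed C \<and> W \<subseteq> C \<longrightarrow> Z \<subseteq> C)"

definition locally_accumulating :: "(rat \<times> rat) set \<Rightarrow> bool" where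
  "locally_accumulating Z \<longleftrightarrow> subvariety Z \<and>
     (\<forall>W. dense_open_in W Z \<longrightarrow> alpha W < alpha_ess)"

end

theory Submission
  imports Defs
begin

text \<open>
  Lower bound: write \<open>P = (y/x, t/s)\<close> in lowest terms. The gcd product in the height divides
  both \<open>xy\<close> and \<open>st\<close>, so near \<open>Q\<close> the height is at least \<open>max(x, s)\<^sup>2 / 3\<close>, while
  \<open>w \<noteq> 1\<close> (resp. \<open>z \<noteq> 1\<close>) forces \<open>d(P) \<ge> 1/x\<close> (resp. \<open>1/s\<close>). Hence \<open>d(P)\<^sup>2 H(P) \<ge> 1/3\<close>
  and \<open>\<alpha>(Q, V) \<ge> 2\<close> for every \<open>V\<close>.

  Upper bound: if \<open>D\<^sup>2 - 2A\<^sup>2\<close> and \<open>B\<^sup>2 - 2C\<^sup>2\<close> are \<open>\<plusminus>1\<close>, the point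
  \<open>(CD/(AB), BD/(2AC))\<close> has distance \<open>\<le> 1/A\<^sup>2 + 1/C\<^sup>2\<close> to \<open>Q\<close>, while \<open>ABCD\<close> divides all
  monomials of its height, which is therefore \<open>\<le> 16 A\<^sup>2 C\<^sup>2\<close>. Taking \<open>(A, D)\<close> and \<open>(C, B)\<close>
  to be Pell solutions of indices \<open>n \<ge> m\<close> with \<open>n - m\<close> bounded keeps \<open>d\<^sup>2 H\<close> bounded.
  For fixed \<open>m\<close> these points lie on one line through the origin at pairwise distinct
  parameters, and the lines are distinct for distinct \<open>m\<close>. A nonzero polynomial of degree
  \<open>N\<close> can therefore not vanish on all points with \<open>m \<le> n \<le> m + N\<close> for all large \<open>m\<close>, so
  every dense open set contains such a sequence, and \<open>\<alpha> = 2\<close> there as well.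
\<close>

lemma cx_cy_of_fraction:
  fixes X Y :: int
  assumes "X > 0"
  shows "cx (of_int Y / of_int X) = X div gcd Y X" "cy (of_int Y / of_int X) = Y div gcd Y X"
  using assms by (simp_all add: cx_def cy_def Fract_of_int_quotient[symmetric] quotient_of_Fract
      Rat.normalize_def Let_def)

lemma cx_pos: "cx w > 0"
  unfolding cx_def by (rule quotient_of_denom_pos')

lemma coprime_cy_cx: "coprime (cy w) (cx w)"
  unfolding cx_def cy_def by (metis prod.collapse quotient_of_coprime)

lemma of_rat_eq_cy_div_cx: "real_of_rat w = real_of_int (cy w) / real_of_int (cx w)"
proof -
  obtain a b where q: "quotient_of w = (a, b)" by (cases "quotient_of w") auto
  show ?thesis using quotient_of_div[OF q] q by (simp add: cx_def cy_def of_rat_divide)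
qed

definition height_num :: "int \<Rightarrow> int \<Rightarrow> int \<Rightarrow> int \<Rightarrow> int" where
  "height_num x y s t =
     max (max \<bar>x^2 * s * t\<bar> \<bar>y^2 * s * t\<bar>) (max \<bar>t^2 * x * y\<bar> \<bar>s^2 * x * y\<bar>)"

definition gcd_prod :: "int \<Rightarrow> int \<Rightarrow> int \<Rightarrow> int \<Rightarrow> int" where
  "gcd_prod x y s t = gcd x s * gcd x t * gcd y s * gcd y t"

lemma height_eq:
  "height (w, z) = real_of_int (height_num (cx w) (cy w) (cx z) (cy z))
                   / real_of_int (gcd_prod (cx w) (cy w) (cx z) (cy z))"
  unfolding height_def height_num_def gcd_prod_def Let_def by simp

lemma height_num_scale:
  "height_num (l * x) (l * y) (m * s) (m * t) = l^2 * m^2 * height_num x y s t"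
proof -
  let ?k = "l^2 * m^2"
  have "(l * x)^2 * (m * s) * (m * t) = ?k * (x^2 * s * t)"
    "(l * y)^2 * (m * s) * (m * t) = ?k * (y^2 * s * t)"
    "(m * t)^2 * (l * x) * (l * y) = ?k * (t^2 * x * y)"
    "(m * s)^2 * (l * x) * (l * y) = ?k * (s^2 * x * y)"
    by (simp_all add: power2_eq_square ac_simps)
  moreover have "\<bar>?k * u\<bar> = ?k * \<bar>u\<bar>" for u by (simp add: abs_mult)
  ultimately show ?thesis
    unfolding height_num_def
    by (simp only: max_mult_distrib_left zero_le_mult_iff zero_le_power2 simp_thms if_True)
qed

lemma dvd_gcd_prod:
  fixes x y s t d :: int
  assumes "d dvd s * t" "d dvd x * y"
  shows "d dvd gcd_prod x y s t"
proof -
  obtain d1 d2 where d: "d = d1 * d2" "d1 dvd s" "d2 dvd t" using assms(1) by (rule dvd_productE)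
  obtain d11 d12 where d1: "d1 = d11 * d12" "d11 dvd x" "d12 dvd y"
    using assms(2) d by (metis dvd_mult_left dvd_productE)
  obtain d21 d22 where d2: "d2 = d21 * d22" "d21 dvd x" "d22 dvd y"
    using assms(2) d by (metis dvd_mult_right dvd_productE)
  have "d11 * d21 * d12 * d22 dvd gcd_prod x y s t"
    unfolding gcd_prod_def using d d1 d2 by (intro mult_dvd_mono gcd_greatest) auto
  moreover have "d = d11 * d21 * d12 * d22" using d d1 d2 by (simp add: ac_simps)
  ultimately show ?thesis by simp
qed

lemma dvd_mult_gcd_prod:
  fixes k x y s t d :: int
  assumes "coprime x y" "coprime s t"
    and "d dvd k * (x^2 * s * t)" "d dvd k * (y^2 * s * t)"
    and "d dvd k * (t^2 * x * y)" "d dvd k * (s^2 * x * y)"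
  shows "d dvd k * gcd_prod x y s t"
proof -
  have "d dvd gcd (k * (s * t) * x^2) (k * (s * t) * y^2)" using assms(3,4) by (simp add: ac_simps)
  then have st: "d dvd k * (s * t)" using assms(1) by (simp add: gcd_mult_left)
  have "d dvd gcd (k * (x * y) * t^2) (k * (x * y) * s^2)" using assms(5,6) by (simp add: ac_simps)
  then have xy: "d dvd k * (x * y)" using assms(2) by (simp add: gcd_mult_left coprime_commute)
  have "d dvd gcd (k * (s * t)) (k * (x * y))" using st xy by simp
  then have "d dvd k * gcd (s * t) (x * y)" by (simp add: gcd_mult_left)
  moreover have "gcd (s * t) (x * y) dvd gcd_prod x y s t" by (rule dvd_gcd_prod) auto
  ultimately show ?thesis by (meson dvd_trans mult_dvd_mono dvd_refl)
qed

lemma gcd_prod_pos: "x \<noteq> 0 \<Longrightarrow> s \<noteq> 0 \<Longrightarrow> y \<noteq> 0 \<Longrightarrow> gcd_prod x y s t > 0"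
  unfolding gcd_prod_def by (simp add: zero_less_mult_iff)

lemma height_num_nonneg: "height_num x y s t \<ge> 0"
  unfolding height_num_def by simp

lemma height_le_of_common_divisor:
  fixes X Y S T G :: int
  assumes X: "X > 0" and S: "S > 0" and Y: "Y \<noteq> 0" and G: "G > 0"
    and "G dvd X^2 * S * T" "G dvd Y^2 * S * T" "G dvd T^2 * X * Y" "G dvd S^2 * X * Y"
  shows "height (of_int Y / of_int X, of_int T / of_int S)
           \<le> real_of_int (height_num X Y S T) / real_of_int G"
proof -
  define w z where "w = (of_int Y / of_int X :: rat)" and "z = (of_int T / of_int S :: rat)"
  define x y s t where "x = cx w" and "y = cy w" and "s = cx z" and "t = cy z"
  define l m where "l = gcd Y X" and "m = gcd T S"
  have l: "l > 0" and m: "m > 0" using X S unfolding l_def m_def by simp_all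
  have XY: "X = l * x" "Y = l * y" and ST: "S = m * s" "T = m * t"
    using X S unfolding x_def y_def s_def t_def w_def z_def l_def m_def
    by (simp_all add: cx_cy_of_fraction)
  define k where "k = l^2 * m^2"
  have k: "k > 0" using l m unfolding k_def by simp
  have "G dvd k * (x^2 * s * t)" "G dvd k * (y^2 * s * t)"
    "G dvd k * (t^2 * x * y)" "G dvd k * (s^2 * x * y)"
    using assms(5-8) unfolding XY ST k_def by (simp_all add: power2_eq_square ac_simps)
  then have "G dvd k * gcd_prod x y s t"
    using coprime_cy_cx unfolding x_def y_def s_def t_def
    by (intro dvd_mult_gcd_prod) (simp_all add: coprime_commute)
  moreover have g: "gcd_prod x y s t > 0"
    using cx_pos[of w] cx_pos[of z] Y XY unfolding x_def s_def by (intro gcd_prod_pos) auto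
  ultimately have "G \<le> k * gcd_prod x y s t" using k by (simp add: zdvd_imp_le)
  have "height (w, z) = real_of_int (k * height_num x y s t) / real_of_int (k * gcd_prod x y s t)"
    using k unfolding height_eq x_def y_def s_def t_def by simp
  also have "\<dots> = real_of_int (height_num X Y S T) / real_of_int (k * gcd_prod x y s t)"
    unfolding XY ST height_num_scale k_def ..
  also have "\<dots> \<le> real_of_int (height_num X Y S T) / real_of_int G"
    using \<open>G \<le> k * gcd_prod x y s t\<close> G k g height_num_nonneg[of X Y S T]
    by (intro divide_left_mono) (simp_all only: of_int_le_iff of_int_0_le_iff of_int_0_less_iff
        flip: of_int_mult, simp)
  finally show ?thesis unfolding w_def z_def .
qed

lemma gcd_prod_swap: "gcd_prod s t x y = gcd_prod x y s t"
  unfolding gcd_prod_def by (simp add: ac_simps)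

lemma height_num_swap: "height_num s t x y = height_num x y s t"
  unfolding height_num_def by (metis max.commute)

lemma height_swap: "height (z, w) = height (w, z)"
  unfolding height_eq height_num_swap[of "cx z" "cy z"] gcd_prod_swap[of "cx z" "cy z"] ..

lemma distQ_swap: "distQ (z, w) = distQ (w, z)"
  unfolding distQ_def by (simp add: max.commute)

lemma gcd_mult_gcd_dvd: "coprime s t \<Longrightarrow> gcd x s * gcd x t dvd (x :: int)"
  by (simp add: divides_mult coprime_divisors[OF gcd_dvd2 gcd_dvd2])

lemma gcd_prod_dvd: "coprime x y \<Longrightarrow> gcd_prod x y s t dvd s * t"
proof -
  assume "coprime x y"
  then have "gcd s x * gcd s y dvd s" "gcd t x * gcd t y dvd t" by (simp_all add: gcd_mult_gcd_dvd)
  then have "(gcd s x * gcd s y) * (gcd t x * gcd t y) dvd s * t" by (rule mult_dvd_mono)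
  then show ?thesis unfolding gcd_prod_def by (simp add: ac_simps)
qed

lemma inverse_le_abs_div_minus_one:
  fixes a b :: int
  assumes "b > 0" "a \<noteq> b"
  shows "1 / real_of_int b \<le> \<bar>real_of_int a / real_of_int b - 1\<bar>"
proof -
  have "1 \<le> \<bar>real_of_int a - real_of_int b\<bar>" using assms(2) by linarith
  also have "\<dots> = real_of_int b * \<bar>real_of_int a / real_of_int b - 1\<bar>"
    using assms(1) by (simp add: field_simps abs_mult flip: abs_of_pos)
  finally show ?thesis using assms(1) by (simp add: field_simps)
qed

lemma sq_div_three_le_quotient:
  fixes x y s t g M :: real
  assumes "0 < g" "g \<le> s * t" "s^2 * x * y \<le> M" "x \<le> 2 * y" "2 * t \<le> 3 * s" "0 < x" "0 < s"
  shows "x^2 / 3 \<le> M / g"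
proof -
  have "x^2 / 3 * g \<le> x^2 / 3 * (s * t)" using assms by (intro mult_left_mono) simp_all
  also have "\<dots> \<le> x^2 / 3 * (s * (3 * s / 2))" using assms by (intro mult_left_mono) simp_all
  also have "\<dots> = x * s^2 * (x / 2)" by (simp add: power2_eq_square)
  also have "\<dots> \<le> x * s^2 * y" using assms by (intro mult_left_mono) simp_all
  also have "\<dots> \<le> M" using assms(3) by (simp add: ac_simps)
  finally show ?thesis using assms(1) by (simp add: field_simps)
qed

lemma height_ge_sq_cx:
  assumes "distQ (w, z) < 1/2"
  shows "real_of_int (cx w) ^ 2 / 3 \<le> height (w, z)"
proof -
  define x y s t where "x = cx w" and "y = cy w" and "s = cx z" and "t = cy z"
  have x: "x > 0" and s: "s > 0" unfolding x_def s_def by (simp_all add: cx_pos)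
  have "\<bar>real_of_int y / real_of_int x - 1\<bar> \<le> distQ (w, z)"
    "\<bar>real_of_int t / real_of_int s - 1\<bar> \<le> distQ (w, z)"
    unfolding distQ_def x_def y_def s_def t_def by (simp_all add: of_rat_eq_cy_div_cx)
  then have "1/2 < real_of_int y / real_of_int x" "1/2 < real_of_int t / real_of_int s"
    "real_of_int t / real_of_int s < 3/2"
    using assms unfolding abs_le_iff by linarith+
  then have y: "real_of_int x \<le> 2 * real_of_int y" and "0 < t"
    and t: "2 * real_of_int t \<le> 3 * real_of_int s"
    using x s by (simp_all add: field_simps)
  have "y \<noteq> 0" using x y by auto
  then have g: "gcd_prod x y s t > 0" using x s by (simp add: gcd_prod_pos)
  have "gcd_prod x y s t \<le> s * t"
    using gcd_prod_dvd[of x y s t] coprime_cy_cx[of w] s \<open>0 < t\<close> unfolding x_def y_def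
    by (auto simp: coprime_commute intro: zdvd_imp_le)
  then have g_le: "real_of_int (gcd_prod x y s t) \<le> real_of_int s * real_of_int t"
    by (metis of_int_le_iff of_int_mult)
  have "s^2 * x * y \<le> height_num x y s t" unfolding height_num_def by simp
  then have M: "real_of_int s ^ 2 * real_of_int x * real_of_int y \<le> real_of_int (height_num x y s t)"
    by (metis of_int_le_iff of_int_mult of_int_power)
  show ?thesis
    unfolding height_eq x_def [symmetric] y_def [symmetric] s_def [symmetric] t_def [symmetric]
    using g g_le M y t x s by (intro sq_div_three_le_quotient) auto
qed

text \<open>By symmetry under \<open>(w, z) \<mapsto> (z, w)\<close> it suffices to treat \<open>w \<noteq> 1\<close>.\<close>

lemma distQ_sq_height_ge_fst:
  assumes "w \<noteq> 1" "distQ (w, z) < 1/2"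
  shows "1/3 \<le> distQ (w, z)^2 * height (w, z)"
proof -
  define x d where "x = real_of_int (cx w)" and "d = distQ (w, z)"
  have x: "x > 0" unfolding x_def by (simp add: cx_pos)
  have "cy w \<noteq> cx w"
  proof
    assume "cy w = cx w"
    then have "real_of_rat w = 1" using of_rat_eq_cy_div_cx[of w] cx_pos[of w] by simp
    then show False using assms(1) by simp
  qed
  then have "1 / x \<le> \<bar>real_of_rat w - 1\<bar>"
    using inverse_le_abs_div_minus_one[OF cx_pos] unfolding x_def of_rat_eq_cy_div_cx by blast
  also have "\<dots> \<le> d" unfolding d_def distQ_def by simp
  finally have "(1 / x)^2 * (x^2 / 3) \<le> d^2 * height (w, z)"
    using height_ge_sq_cx[OF assms(2)] x unfolding x_def by (intro mult_mono power_mono) simp_all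
  then show ?thesis using x unfolding d_def by (simp add: field_simps)
qed

lemma distQ_sq_height_ge:
  assumes "p \<noteq> Qpt" "distQ p < 1/2"
  shows "1/3 \<le> distQ p ^ 2 * height p"
proof -
  obtain w z where p: "p = (w, z)" by (cases p)
  then consider "w \<noteq> 1" | "z \<noteq> 1" using assms(1) unfolding Qpt_def by auto
  then show ?thesis
  proof cases
    case 1
    then show ?thesis using assms(2) p distQ_sq_height_ge_fst by simp
  next
    case 2
    then show ?thesis using assms(2) p distQ_sq_height_ge_fst[of z w]
      by (simp add: distQ_swap height_swap)
  qed
qed

lemma abs_diff_mult_le_abs_diff_squares:
  fixes u v :: "'a :: linordered_idom"
  assumes "0 \<le> u" "0 \<le> v"
  shows "\<bar>u - v\<bar> * v \<le> \<bar>u^2 - v^2\<bar>"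
proof -
  have "\<bar>u - v\<bar> * v \<le> \<bar>u - v\<bar> * (u + v)" using assms by (intro mult_left_mono) simp_all
  also have "\<dots> = \<bar>(u - v) * (u + v)\<bar>" using assms by (simp add: abs_mult)
  also have "(u - v) * (u + v) = u^2 - v^2" by (simp add: power2_eq_square algebra_simps)
  finally show ?thesis .
qed

lemma div_le_div_sq:
  fixes k p q R :: real
  assumes "0 \<le> k" "0 < p" "p \<le> q" "k * q \<le> R"
  shows "k / q \<le> R / p^2"
proof -
  have q: "q > 0" using assms by linarith
  have "k / q = k * q / q^2" using q by (simp add: power2_eq_square)
  also have "\<dots> \<le> R / q^2" using assms(4) q by (simp add: divide_right_mono)
  also have "\<dots> \<le> R / p^2"
    using assms q order_trans[OF mult_nonneg_nonneg assms(4)] by (intro divide_left_mono power_mono) auto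
  finally show ?thesis .
qed

lemma odd_if_abs_pell:
  fixes x y :: int
  assumes "\<bar>x^2 - 2 * y^2\<bar> = 1"
  shows "odd x"
proof -
  have "x^2 - 2 * y^2 = 1 \<or> x^2 - 2 * y^2 = -1" using assms by linarith
  then have "odd (x^2 - 2 * y^2)" by (elim disjE) (simp_all only: odd_one even_minus not_False_eq_True)
  then show ?thesis by simp
qed

definition pell_point :: "int \<Rightarrow> int \<Rightarrow> int \<Rightarrow> int \<Rightarrow> rat \<times> rat" where
  "pell_point A B C D = (of_int (C * D) / of_int (A * B), of_int (B * D) / of_int (2 * A * C))"

locale pell_pair =
  fixes A B C D :: int
  assumes A_ge_1: "A \<ge> 1" and C_ge_1: "C \<ge> 1"
    and B_bounds: "C \<le> B" "B \<le> 2 * C" and D_bounds: "A \<le> D" "D \<le> 2 * A"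
    and pell_AD: "\<bar>D^2 - 2 * A^2\<bar> = 1" and pell_CB: "\<bar>B^2 - 2 * C^2\<bar> = 1"
begin

lemma positive: "A > 0" "B > 0" "C > 0" "D > 0"
  using A_ge_1 C_ge_1 B_bounds D_bounds by linarith+

lemma height_num_pell_point:
  "height_num (A * B) (C * D) (2 * A * C) (B * D) \<le> A * B * C * D * (16 * (A^2 * C^2))"
proof -
  define G where "G = A * B * C * D"
  have X: "(A * B)^2 * (2 * A * C) * (B * D) = G * (2 * (A^2 * B^2))"
    and Y: "(C * D)^2 * (2 * A * C) * (B * D) = G * (2 * (C^2 * D^2))"
    and T: "(B * D)^2 * (A * B) * (C * D) = G * (B^2 * D^2)"
    and S: "(2 * A * C)^2 * (A * B) * (C * D) = G * (4 * (A^2 * C^2))"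
    unfolding G_def by (simp_all add: power2_eq_square ac_simps)
  have "B^2 \<le> (2 * C)^2" "D^2 \<le> (2 * A)^2"
    using B_bounds D_bounds positive by (intro power_mono; simp)+
  then have B2: "B^2 \<le> 4 * C^2" and D2: "D^2 \<le> 4 * A^2" by simp_all
  have AC: "0 \<le> A^2 * C^2" by simp
  have "A^2 * B^2 \<le> 4 * (A^2 * C^2)"
    using mult_left_mono[OF B2, of "A^2"] by (simp add: algebra_simps)
  then have X_le: "2 * (A^2 * B^2) \<le> 16 * (A^2 * C^2)" using AC by linarith
  have "C^2 * D^2 \<le> 4 * (A^2 * C^2)"
    using mult_left_mono[OF D2, of "C^2"] by (simp add: algebra_simps)
  then have Y_le: "2 * (C^2 * D^2) \<le> 16 * (A^2 * C^2)" using AC by linarith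
  have T_le: "B^2 * D^2 \<le> 16 * (A^2 * C^2)"
    using mult_mono[OF B2 D2] by (simp add: algebra_simps)
  have S_le: "4 * (A^2 * C^2) \<le> 16 * (A^2 * C^2)" using AC by linarith
  have bound: "\<bar>G * u\<bar> \<le> G * (16 * (A^2 * C^2))" if "0 \<le> u" "u \<le> 16 * (A^2 * C^2)" for u
    using that positive by (simp add: G_def abs_mult mult_left_mono)
  show ?thesis
    unfolding height_num_def X Y T S G_def [symmetric]
    using X_le Y_le T_le S_le by (intro max.boundedI bound) simp_all
qed

lemma height_pell_point: "height (pell_point A B C D) \<le> 16 * real_of_int A ^ 2 * real_of_int C ^ 2"
proof -
  define G where "G = A * B * C * D"
  have G: "G > 0" using positive unfolding G_def by simp
  have "height (pell_point A B C D)
          \<le> real_of_int (height_num (A * B) (C * D) (2 * A * C) (B * D)) / real_of_int G"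
    unfolding pell_point_def
  proof (rule height_le_of_common_divisor)
    show "A * B > 0" "2 * A * C > 0" "C * D \<noteq> 0" "G > 0" using positive G by simp_all
    show "G dvd (A * B)^2 * (2 * A * C) * (B * D)" "G dvd (C * D)^2 * (2 * A * C) * (B * D)"
      "G dvd (B * D)^2 * (A * B) * (C * D)" "G dvd (2 * A * C)^2 * (A * B) * (C * D)"
      unfolding G_def by (simp_all add: power2_eq_square)
  qed
  also have "\<dots> \<le> 16 * real_of_int A ^ 2 * real_of_int C ^ 2"
  proof -
    have "real_of_int (height_num (A * B) (C * D) (2 * A * C) (B * D))
            \<le> real_of_int (G * (16 * (A^2 * C^2)))"
      using height_num_pell_point unfolding G_def by (simp only: of_int_le_iff)
    then show ?thesis using G by (simp add: divide_le_eq ac_simps)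
  qed
  finally show ?thesis .
qed

lemma pell_point_fst_bound: "\<bar>C * D - A * B\<bar> * (A * B) \<le> A^2 + C^2"
proof -
  have "\<bar>C * D - A * B\<bar> * (A * B) \<le> \<bar>(C * D)^2 - (A * B)^2\<bar>"
    using positive by (intro abs_diff_mult_le_abs_diff_squares) simp_all
  also have "(C * D)^2 - (A * B)^2 = C^2 * (D^2 - 2 * A^2) - A^2 * (B^2 - 2 * C^2)"
    by (simp add: power_mult_distrib algebra_simps)
  also have "\<bar>\<dots>\<bar> \<le> \<bar>C^2 * (D^2 - 2 * A^2)\<bar> + \<bar>A^2 * (B^2 - 2 * C^2)\<bar>"
    by (rule abs_triangle_ineq4)
  also have "\<dots> = C^2 + A^2" using pell_AD pell_CB by (simp add: abs_mult)
  finally show ?thesis by simp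
qed

lemma pell_point_snd_bound: "\<bar>B * D - 2 * A * C\<bar> * (2 * A * C) \<le> 3 * (A^2 + C^2)"
proof -
  have "\<bar>B * D - 2 * A * C\<bar> * (2 * A * C) \<le> \<bar>(B * D)^2 - (2 * A * C)^2\<bar>"
    using positive by (intro abs_diff_mult_le_abs_diff_squares) simp_all
  also have "(B * D)^2 - (2 * A * C)^2 = (B^2 - 2 * C^2) * (D^2 - 2 * A^2)
      + 2 * C^2 * (D^2 - 2 * A^2) + 2 * A^2 * (B^2 - 2 * C^2)"
    by (simp add: power_mult_distrib algebra_simps)
  also have "\<bar>\<dots>\<bar> \<le> 1 + 2 * C^2 + 2 * A^2"
    using pell_AD pell_CB by (auto simp: abs_mult intro!: abs_triangle_ineq [THEN order_trans] add_mono)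
  also have "\<dots> \<le> 3 * (A^2 + C^2)"
  proof -
    have "1 \<le> A^2 + C^2" using one_le_power[OF A_ge_1, of 2] by (simp add: add_increasing2)
    then show ?thesis by (simp add: algebra_simps)
  qed
  finally show ?thesis .
qed

lemma dist_fst_pell_point:
  "\<bar>real_of_rat (fst (pell_point A B C D)) - 1\<bar> \<le> 1 / real_of_int A ^ 2 + 1 / real_of_int C ^ 2"
proof -
  define a b c d where "a = real_of_int A" and "b = real_of_int B" and "c = real_of_int C"
    and "d = real_of_int D"
  have pos: "a > 0" "b > 0" "c > 0" "d > 0" and "c \<le> b"
    using positive B_bounds unfolding a_def b_def c_def d_def by simp_all
  have "real_of_int (\<bar>C * D - A * B\<bar> * (A * B)) \<le> real_of_int (A^2 + C^2)"
    using pell_point_fst_bound by (simp only: of_int_le_iff)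
  then have bound: "\<bar>c * d - a * b\<bar> * (a * b) \<le> a^2 + c^2"
    unfolding a_def b_def c_def d_def by simp
  have "\<bar>real_of_rat (fst (pell_point A B C D)) - 1\<bar> = \<bar>c * d - a * b\<bar> / (a * b)"
    using pos unfolding pell_point_def a_def b_def c_def d_def
    by (simp add: of_rat_divide of_rat_mult field_simps)
  also have "\<dots> \<le> (a^2 + c^2) / (a * c)^2"
    using pos \<open>c \<le> b\<close> bound by (intro div_le_div_sq) simp_all
  also have "\<dots> = 1 / a^2 + 1 / c^2" using pos by (simp add: field_simps power2_eq_square)
  finally show ?thesis unfolding a_def c_def .
qed

lemma dist_snd_pell_point:
  "\<bar>real_of_rat (snd (pell_point A B C D)) - 1\<bar> \<le> 1 / real_of_int A ^ 2 + 1 / real_of_int C ^ 2"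
proof -
  define a b c d where "a = real_of_int A" and "b = real_of_int B" and "c = real_of_int C"
    and "d = real_of_int D"
  have pos: "a > 0" "b > 0" "c > 0" "d > 0"
    using positive unfolding a_def b_def c_def d_def by simp_all
  have "real_of_int (\<bar>B * D - 2 * A * C\<bar> * (2 * A * C)) \<le> real_of_int (3 * (A^2 + C^2))"
    using pell_point_snd_bound by (simp only: of_int_le_iff)
  then have bound: "\<bar>b * d - 2 * a * c\<bar> * (2 * a * c) \<le> 3 * (a^2 + c^2)"
    unfolding a_def b_def c_def d_def by simp
  have "\<bar>real_of_rat (snd (pell_point A B C D)) - 1\<bar> = \<bar>b * d - 2 * a * c\<bar> / (2 * a * c)"
    using pos unfolding pell_point_def a_def b_def c_def d_def
    by (simp add: of_rat_divide of_rat_mult field_simps)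
  also have "\<dots> \<le> 3 * (a^2 + c^2) / (2 * a * c)^2"
    using pos bound by (intro div_le_div_sq) simp_all
  also have "\<dots> \<le> 1 / a^2 + 1 / c^2"
    using pos by (simp add: power2_eq_square field_simps)
  finally show ?thesis unfolding a_def c_def .
qed

lemma distQ_pell_point: "distQ (pell_point A B C D) \<le> 1 / real_of_int A ^ 2 + 1 / real_of_int C ^ 2"
  using dist_fst_pell_point dist_snd_pell_point unfolding distQ_def by simp

lemma pell_point_ne_Qpt: "pell_point A B C D \<noteq> Qpt"
proof
  assume "pell_point A B C D = Qpt"
  then have "rat_of_int (B * D) = of_int (2 * A * C)"
    using positive unfolding pell_point_def Qpt_def by (simp add: divide_eq_1_iff)
  then have "B * D = 2 * A * C" by (simp only: of_int_eq_iff)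
  moreover have "odd B" "odd D" using pell_CB pell_AD by (simp_all add: odd_if_abs_pell)
  ultimately show False by (metis even_mult_iff even_numeral)
qed

lemma pell_point_in_chart: "pell_point A B C D \<in> chart_pts"
  unfolding chart_pts_def pell_point_def using positive by simp

end

text \<open>\<open>pell_x k + pell_y k \<cdot> \<surd>2 = (1 + \<surd>2)\<^sup>k\<^sup>+\<^sup>1\<close>.\<close>

fun pell :: "nat \<Rightarrow> int \<times> int" where
  "pell 0 = (1, 1)"
| "pell (Suc k) = (fst (pell k) + 2 * snd (pell k), fst (pell k) + snd (pell k))"

definition pell_x :: "nat \<Rightarrow> int" where "pell_x k = fst (pell k)"
definition pell_y :: "nat \<Rightarrow> int" where "pell_y k = snd (pell k)"

lemma pell_x_Suc: "pell_x (Suc k) = pell_x k + 2 * pell_y k"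
  and pell_y_Suc: "pell_y (Suc k) = pell_x k + pell_y k"
  by (simp_all add: pell_x_def pell_y_def)

lemma pell_equation: "pell_x k ^ 2 - 2 * pell_y k ^ 2 = (-1) ^ Suc k"
proof (induction k)
  case 0
  then show ?case by (simp add: pell_x_def pell_y_def)
next
  case (Suc k)
  have "pell_x (Suc k) ^ 2 - 2 * pell_y (Suc k) ^ 2 = - (pell_x k ^ 2 - 2 * pell_y k ^ 2)"
    unfolding pell_x_Suc pell_y_Suc by (simp add: power2_eq_square algebra_simps)
  then show ?case using Suc by simp
qed

lemma abs_pell_equation: "\<bar>pell_x k ^ 2 - 2 * pell_y k ^ 2\<bar> = 1"
  by (simp add: pell_equation)

lemma pell_bounds: "1 \<le> pell_y k \<and> pell_y k \<le> pell_x k \<and> pell_x k \<le> 2 * pell_y k"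
  by (induction k) (simp_all add: pell_x_Suc pell_y_Suc pell_x_def pell_y_def)

lemma one_le_pell_y: "1 \<le> pell_y k" and pell_y_le_pell_x: "pell_y k \<le> pell_x k"
  and pell_x_le_twice_pell_y: "pell_x k \<le> 2 * pell_y k"
  using pell_bounds[of k] by auto

lemma strict_mono_pell_y: "strict_mono pell_y"
proof (rule strict_monoI_Suc)
  show "pell_y k < pell_y (Suc k)" for k
    using one_le_pell_y[of k] pell_y_le_pell_x[of k] by (simp add: pell_y_Suc)
qed

lemma Suc_index_le_pell_y: "int k + 1 \<le> pell_y k"
proof (induction k)
  case (Suc k)
  then show ?case using strict_monoD[OF strict_mono_pell_y, of k "Suc k"] by simp
qed (simp add: pell_y_def)

lemma pell_y_add_le: "pell_y (k + j) \<le> 3 ^ j * pell_y k"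
proof (induction j)
  case (Suc j)
  have "pell_y (k + Suc j) \<le> 3 * pell_y (k + j)"
    using pell_x_le_twice_pell_y[of "k + j"] by (simp add: pell_y_Suc)
  also have "\<dots> \<le> 3 * (3 ^ j * pell_y k)" using Suc by simp
  finally show ?case by simp
qed simp

lemma pell_pair_pell: "pell_pair (pell_y n) (pell_x m) (pell_y m) (pell_x n)"
  by unfold_locales (simp_all add: one_le_pell_y pell_y_le_pell_x pell_x_le_twice_pell_y abs_pell_equation)

lemma pell_ratio_inj:
  assumes "pell_y n ^ 2 * pell_x k ^ 2 = pell_y k ^ 2 * pell_x n ^ 2"
  shows "n = k"
proof -
  have "pell_y n ^ 2 * (pell_x k ^ 2 - 2 * pell_y k ^ 2) = pell_y k ^ 2 * (pell_x n ^ 2 - 2 * pell_y n ^ 2)"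
    using assms by (simp add: algebra_simps)
  then have "\<bar>pell_y n ^ 2 * (pell_x k ^ 2 - 2 * pell_y k ^ 2)\<bar>
      = \<bar>pell_y k ^ 2 * (pell_x n ^ 2 - 2 * pell_y n ^ 2)\<bar>" by simp
  then have "pell_y n ^ 2 = pell_y k ^ 2" by (simp add: abs_mult abs_pell_equation)
  then have "pell_y n = pell_y k" using one_le_pell_y[of n] one_le_pell_y[of k] by (simp add: power2_eq_iff)
  then show ?thesis using strict_mono_pell_y by (simp add: strict_mono_eq)
qed

lemma eval2_pCons: "eval2 (pCons g F) (w, z) = poly g w + z * eval2 F (w, z)"
  unfolding eval2_def by simp

lemma eval2_along_line:
  fixes f :: "rat poly poly"
  assumes "\<forall>i. degree (coeff f i) \<le> K"
  shows "\<exists>p. degree p \<le> K + degree f \<and> (\<forall>r. poly p r = eval2 f (c * r, k * r))"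
  using assms
proof (induction f rule: pCons_induct)
  case 0
  show ?case by (intro exI[of _ 0]) (simp add: eval2_def)
next
  case (pCons g F)
  define q where "q = g \<circ>\<^sub>p [:0, c:]"
  have q: "poly q r = poly g (c * r)" for r unfolding q_def by (simp add: poly_pcompose mult.commute)
  have "degree q \<le> degree g * degree [:0, c:]" unfolding q_def by (rule degree_pcompose_le)
  also have "\<dots> \<le> degree g" by (simp add: mult_le_cancel1)
  also have "\<dots> \<le> K" using pCons.prems[rule_format, of 0] by simp
  finally have dq: "degree q \<le> K" .
  show ?case
  proof (cases "F = 0")
    case True
    then show ?thesis using dq q by (intro exI[of _ q]) (simp add: eval2_pCons eval2_def)
  next
    case False
    obtain pF where pF: "degree pF \<le> K + degree F" "\<forall>r. poly pF r = eval2 F (c * r, k * r)"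
      using pCons.IH pCons.prems by (metis coeff_pCons_Suc)
    have "degree ([:0, k:] * pF) \<le> K + degree (pCons g F)"
      using degree_mult_le[of "[:0, k:]" pF] pF(1) False by simp
    then have "degree (q + [:0, k:] * pF) \<le> K + degree (pCons g F)"
      using dq by (intro degree_add_le) simp_all
    moreover have "\<forall>r. poly (q + [:0, k:] * pF) r = eval2 (pCons g F) (c * r, k * r)"
      using q pF(2) by (simp add: eval2_pCons algebra_simps)
    ultimately show ?thesis by blast
  qed
qed

lemma eval2_eq_0_if_vanishes_on_lines:
  fixes f :: "rat poly poly" and L :: "rat set"
  assumes "infinite L" "\<And>l z. l \<in> L \<Longrightarrow> eval2 f (l * z, z) = 0"
  shows "f = 0"
proof -
  have "poly f [:z:] = 0" if "z \<noteq> 0" for z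
  proof (rule ccontr)
    assume "poly f [:z:] \<noteq> 0"
    then have "finite {x. poly (poly f [:z:]) x = 0}" by (rule poly_roots_finite)
    moreover have "(\<lambda>l. l * z) ` L \<subseteq> {x. poly (poly f [:z:]) x = 0}"
      using assms(2) by (auto simp: eval2_def)
    moreover have "infinite ((\<lambda>l. l * z) ` L)"
      using assms(1) that by (auto dest: finite_imageD simp: inj_on_def)
    ultimately show False by (meson finite_subset)
  qed
  then have "(\<lambda>z. [:z:]) ` (UNIV - {0}) \<subseteq> {q. poly f q = 0}" by auto
  moreover have "infinite ((\<lambda>z. [:z:]) ` (UNIV - {0 :: rat}))"
    using infinite_UNIV_char_0 by (auto dest!: finite_imageD simp: inj_on_def)
  ultimately show "f = 0" using poly_roots_finite[of f] finite_subset by blast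
qed

definition pell_ratio :: "nat \<Rightarrow> rat" where
  "pell_ratio k = of_int (pell_x k) / of_int (pell_y k)"

lemma pell_ratio_pos: "pell_ratio k > 0"
  using one_le_pell_y[of k] pell_y_le_pell_x[of k] unfolding pell_ratio_def by simp

lemma inj_pell_ratio_sq: "inj (\<lambda>k. pell_ratio k ^ 2)"
proof (rule injI)
  fix n k
  assume "pell_ratio n ^ 2 = pell_ratio k ^ 2"
  then have "rat_of_int (pell_y n ^ 2 * pell_x k ^ 2) = rat_of_int (pell_y k ^ 2 * pell_x n ^ 2)"
    using one_le_pell_y[of n] one_le_pell_y[of k] unfolding pell_ratio_def by (simp add: field_simps)
  then show "n = k" by (intro pell_ratio_inj) (simp only: of_int_eq_iff)
qed

lemma inj_pell_ratio: "inj pell_ratio"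
  using inj_pell_ratio_sq by (auto simp: inj_def)

text \<open>
  With \<open>r\<^sub>k = pell_ratio k\<close> the point is \<open>(r\<^sub>n / r\<^sub>m, r\<^sub>m r\<^sub>n / 2)\<close>: for fixed \<open>m\<close> it lies on
  the line \<open>w = (2 / r\<^sub>m\<^sup>2) z\<close> through the origin.
\<close>

definition approx_point :: "nat \<Rightarrow> nat \<Rightarrow> rat \<times> rat" where
  "approx_point m n = pell_point (pell_y n) (pell_x m) (pell_y m) (pell_x n)"

lemma approx_point_eq:
  "approx_point m n =
     (2 / pell_ratio m ^ 2 * (pell_ratio m / 2 * pell_ratio n), pell_ratio m / 2 * pell_ratio n)"
  using one_le_pell_y[of m] one_le_pell_y[of n] pell_ratio_pos[of m]
  unfolding approx_point_def pell_point_def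
  by (simp add: pell_ratio_def field_simps power2_eq_square)

lemma approx_points_avoid_zeros:
  fixes f :: "rat poly poly"
  assumes "f \<noteq> 0"
  obtains N where "\<And>m0. \<exists>m\<ge>m0. \<exists>n. m \<le> n \<and> n \<le> m + N \<and> eval2 f (approx_point m n) \<noteq> 0"
proof -
  define K where "K = (\<Sum>i\<le>degree f. degree (coeff f i))"
  have K: "\<forall>i. degree (coeff f i) \<le> K"
  proof
    show "degree (coeff f i) \<le> K" for i
      by (cases "i \<le> degree f") (auto simp: K_def coeff_eq_0 intro: member_le_sum)
  qed
  define N where "N = K + degree f"
  have "\<exists>m\<ge>m0. \<exists>n. m \<le> n \<and> n \<le> m + N \<and> eval2 f (approx_point m n) \<noteq> 0" for m0
  proof (rule ccontr)
    assume "\<not> (\<exists>m\<ge>m0. \<exists>n. m \<le> n \<and> n \<le> m + N \<and> eval2 f (approx_point m n) \<noteq> 0)"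
    then have zero: "eval2 f (approx_point m n) = 0" if "m0 \<le> m" "m \<le> n" "n \<le> m + N" for m n
      using that by blast
    have "eval2 f (2 / pell_ratio m ^ 2 * z, z) = 0" if "m0 \<le> m" for m z
    proof -
      obtain p where p: "degree p \<le> N" "\<forall>r. poly p r = eval2 f (2 / pell_ratio m ^ 2 * r, 1 * r)"
        using eval2_along_line[OF K] unfolding N_def by blast
      define A where "A = (\<lambda>n. pell_ratio m / 2 * pell_ratio n) ` {m..m + N}"
      have "card A = N + 1"
        using inj_pell_ratio pell_ratio_pos[of m] unfolding A_def by (simp add: card_image inj_on_def)
      moreover have "poly p x = poly 0 x" if "x \<in> A" for x
        using that p(2) zero \<open>m0 \<le> m\<close> unfolding A_def by (auto simp: approx_point_eq)
      ultimately have "p = 0" using p(1) by (intro poly_eqI_degree[of A]) simp_all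
      then show ?thesis using p(2) by simp
    qed
    moreover have "infinite ((\<lambda>m. 2 / pell_ratio m ^ 2) ` {m0..})"
      using inj_pell_ratio_sq pell_ratio_pos
      by (auto dest!: finite_imageD simp: inj_on_def inj_def infinite_Ici)
    ultimately have "f = 0" by (intro eval2_eq_0_if_vanishes_on_lines) auto
    with assms show False ..
  qed
  then show ?thesis using that by blast
qed

lemma distQ_nonneg: "distQ p \<ge> 0"
  unfolding distQ_def by simp

lemma height_nonneg: "height p \<ge> 0"
  unfolding height_def Let_def by (intro divide_nonneg_nonneg) simp_all

lemma distQ_pos: "p \<noteq> Qpt \<Longrightarrow> distQ p > 0"
  unfolding distQ_def Qpt_def by (cases p) (auto simp: less_max_iff_disj)

lemma approx_point_in_chart: "approx_point m n \<in> chart_pts"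
  unfolding approx_point_def by (rule pell_pair.pell_point_in_chart[OF pell_pair_pell])

lemma approx_point_ne_Qpt: "approx_point m n \<noteq> Qpt"
  unfolding approx_point_def by (rule pell_pair.pell_point_ne_Qpt[OF pell_pair_pell])

lemma distQ_approx_point:
  assumes "m \<le> n"
  shows "distQ (approx_point m n) \<le> 2 / real_of_int (pell_y m) ^ 2"
proof -
  define a c where "a = real_of_int (pell_y n)" and "c = real_of_int (pell_y m)"
  have "1 \<le> c" "c \<le> a"
    using one_le_pell_y[of m] strict_mono_less_eq[OF strict_mono_pell_y] assms
    unfolding a_def c_def by simp_all
  then have "1 / a^2 \<le> 1 / c^2" by (intro divide_left_mono power_mono) auto
  moreover have "distQ (approx_point m n) \<le> 1 / a^2 + 1 / c^2"
    unfolding approx_point_def a_def c_def by (rule pell_pair.distQ_pell_point[OF pell_pair_pell])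
  ultimately show ?thesis unfolding c_def by simp
qed

lemma distQ_sq_height_approx_point:
  assumes "m \<le> n" "n \<le> m + N"
  shows "distQ (approx_point m n) ^ 2 * height (approx_point m n) \<le> 64 * 9 ^ N"
proof -
  define a c where "a = real_of_int (pell_y n)" and "c = real_of_int (pell_y m)"
  have c: "1 \<le> c" using one_le_pell_y[of m] unfolding c_def by simp
  have "pell_y n \<le> 3 ^ (n - m) * pell_y m" using pell_y_add_le[of m "n - m"] assms(1) by simp
  also have "\<dots> \<le> 3 ^ N * pell_y m"
    using assms one_le_pell_y[of m] by (intro mult_right_mono power_increasing) auto
  finally have "real_of_int (pell_y n) \<le> real_of_int (3 ^ N * pell_y m)" by (simp only: of_int_le_iff)
  then have "a \<le> 3 ^ N * c" unfolding a_def c_def by simp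
  then have "a^2 \<le> (3 ^ N * c)^2" using one_le_pell_y[of n] unfolding a_def by (intro power_mono) auto
  moreover have "(3 ^ N * c)^2 = 9 ^ N * c^2" by (simp add: power2_eq_square flip: power_mult_distrib)
  ultimately have a: "a^2 \<le> 9 ^ N * c^2" by simp
  have "distQ (approx_point m n) ^ 2 \<le> (2 / c^2) ^ 2"
    using distQ_approx_point[OF assms(1)] distQ_nonneg unfolding c_def by (intro power_mono)
  moreover have "height (approx_point m n) \<le> 16 * a^2 * c^2"
    unfolding approx_point_def a_def c_def by (rule pell_pair.height_pell_point[OF pell_pair_pell])
  ultimately have "distQ (approx_point m n) ^ 2 * height (approx_point m n) \<le> (2 / c^2)^2 * (16 * a^2 * c^2)"
    using height_nonneg by (intro mult_mono) simp_all
  also have "\<dots> = 64 * a^2 / c^2" using c by (simp add: field_simps power2_eq_square)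
  also have "\<dots> \<le> 64 * 9 ^ N" using a c by (simp add: field_simps)
  finally show ?thesis .
qed

lemma exponent_ge_two:
  assumes "\<And>i. P i \<noteq> Qpt" "(\<lambda>i. distQ (P i)) \<longlonglongrightarrow> 0"
    and "\<And>i. distQ (P i) powr \<gamma> * height (P i) \<le> B"
  shows "2 \<le> \<gamma>"
proof (rule ccontr)
  assume "\<not> 2 \<le> \<gamma>"
  have "(\<lambda>i. distQ (P i) powr (2 - \<gamma>)) \<longlonglongrightarrow> 0"
    using \<open>\<not> 2 \<le> \<gamma>\<close>
    by (intro tendsto_zero_powrI[OF assms(2) tendsto_const]) (simp_all add: distQ_nonneg)
  then have "\<forall>\<^sub>F i in sequentially. distQ (P i) powr (2 - \<gamma>) < 1 / (3 * (\<bar>B\<bar> + 1))"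
    by (rule order_tendstoD) (simp add: add_pos_nonneg)
  moreover have "\<forall>\<^sub>F i in sequentially. distQ (P i) < 1/2"
    using assms(2) by (rule order_tendstoD) simp
  ultimately obtain i where small: "distQ (P i) powr (2 - \<gamma>) < 1 / (3 * (\<bar>B\<bar> + 1))"
    and "distQ (P i) < 1/2"
    using eventually_happens'[OF sequentially_bot eventually_conj] by blast
  define d where "d = distQ (P i)"
  have d: "d > 0" unfolding d_def using assms(1) by (rule distQ_pos)
  have "d^2 = d powr \<gamma> * d powr (2 - \<gamma>)"
    using d by (simp add: powr_numeral flip: powr_add)
  have "1/3 \<le> d^2 * height (P i)"
    unfolding d_def using assms(1) \<open>distQ (P i) < 1/2\<close> by (rule distQ_sq_height_ge)
  also have "\<dots> = (d powr \<gamma> * height (P i)) * d powr (2 - \<gamma>)"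
    unfolding \<open>d^2 = d powr \<gamma> * d powr (2 - \<gamma>)\<close> by (simp only: ac_simps)
  also have "\<dots> \<le> \<bar>B\<bar> * d powr (2 - \<gamma>)"
    using assms(3)[of i] height_nonneg unfolding d_def by (intro mult_right_mono) auto
  also have "\<dots> \<le> \<bar>B\<bar> * (1 / (3 * (\<bar>B\<bar> + 1)))"
    using small unfolding d_def by (intro mult_left_mono) simp_all
  also have "\<dots> < 1/3" by (simp add: field_simps)
  finally show False by simp
qed

lemma two_le_alpha: "2 \<le> alpha V"
  unfolding alpha_def
proof (rule Inf_greatest, clarify)
  fix \<gamma> P B
  assume "\<forall>i. P i \<in> V \<and> P i \<in> chart_pts \<and> P i \<noteq> Qpt" "(\<lambda>i. distQ (P i)) \<longlonglongrightarrow> 0"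
    "\<forall>i. distQ (P i) powr \<gamma> * height (P i) \<le> B"
  then show "2 \<le> ereal \<gamma>" using exponent_ge_two[of P \<gamma> B] by simp
qed

lemma alpha_le_two:
  assumes "\<And>i. P i \<in> V \<and> P i \<in> chart_pts \<and> P i \<noteq> Qpt" "(\<lambda>i. distQ (P i)) \<longlonglongrightarrow> 0"
    and "\<And>i. distQ (P i) powr 2 * height (P i) \<le> B"
  shows "alpha V \<le> 2"
  unfolding alpha_def using assms by (intro Inf_lower image_eqI[of _ ereal 2]) auto

lemma approx_sequence_exists:
  fixes f :: "rat poly poly"
  assumes "f \<noteq> 0"
  obtains P B where "\<And>i. P i \<in> {p \<in> chart_pts. eval2 f p \<noteq> 0} \<and> P i \<in> chart_pts \<and> P i \<noteq> Qpt"
    and "(\<lambda>i. distQ (P i)) \<longlonglongrightarrow> 0" and "\<And>i. distQ (P i) powr 2 * height (P i) \<le> B"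
proof -
  obtain N where "\<And>i. \<exists>m\<ge>i. \<exists>n. m \<le> n \<and> n \<le> m + N \<and> eval2 f (approx_point m n) \<noteq> 0"
    using approx_points_avoid_zeros[OF assms] by blast
  then obtain m n where mn: "\<And>i. i \<le> m i \<and> m i \<le> n i \<and> n i \<le> m i + N
                                  \<and> eval2 f (approx_point (m i) (n i)) \<noteq> 0"
    by metis
  define P where "P i = approx_point (m i) (n i)" for i
  have "distQ (P i) \<le> 2 * inverse (real (Suc i))" for i
  proof -
    have "real (Suc i) \<le> real_of_int (pell_y (m i))"
      using Suc_index_le_pell_y[of "m i"] mn[of i] by linarith
    also have "\<dots> \<le> real_of_int (pell_y (m i)) ^ 2"
      using one_le_pell_y[of "m i"] by (simp add: self_le_power)
    finally have "real (Suc i) \<le> real_of_int (pell_y (m i)) ^ 2" .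
    then have "2 / real_of_int (pell_y (m i)) ^ 2 \<le> 2 / real (Suc i)"
      using one_le_pell_y[of "m i"] by (intro divide_left_mono) simp_all
    then show ?thesis
      using distQ_approx_point[of "m i" "n i"] mn[of i] unfolding P_def by (simp add: divide_inverse)
  qed
  then have lim: "(\<lambda>i. distQ (P i)) \<longlonglongrightarrow> 0"
    by (intro tendsto_sandwich[OF _ _ tendsto_const
          tendsto_mult_right_zero[OF LIMSEQ_inverse_real_of_nat, where c = 2]])
      (simp_all add: distQ_nonneg)
  have bound: "distQ (P i) powr 2 * height (P i) \<le> 64 * 9 ^ N" for i
    using distQ_sq_height_approx_point[of "m i" "n i" N] mn[of i] distQ_nonneg[of "P i"]
    unfolding P_def by (simp add: powr_numeral)
  have "P i \<in> {p \<in> chart_pts. eval2 f p \<noteq> 0} \<and> P i \<in> chart_pts \<and> P i \<noteq> Qpt" for i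
    using mn[of i] approx_point_in_chart approx_point_ne_Qpt unfolding P_def by simp
  then show ?thesis using lim bound by (rule that)
qed

lemma alpha_nonvanishing_set:
  assumes "f \<noteq> 0"
  shows "alpha {p \<in> chart_pts. eval2 f p \<noteq> 0} = 2"
proof (rule order_antisym)
  show "alpha {p \<in> chart_pts. eval2 f p \<noteq> 0} \<le> 2"
  proof (rule approx_sequence_exists[OF assms])
    fix P :: "nat \<Rightarrow> rat \<times> rat" and B :: real
    assume "\<And>i. P i \<in> {p \<in> chart_pts. eval2 f p \<noteq> 0} \<and> P i \<in> chart_pts \<and> P i \<noteq> Qpt"
      and "(\<lambda>i. distQ (P i)) \<longlonglongrightarrow> 0" and "\<And>i. distQ (P i) powr 2 * height (P i) \<le> B"
    then show ?thesis by (rule alpha_le_two)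
  qed
qed (rule two_le_alpha)

lemma alpha_chart_pts: "alpha chart_pts = 2"
  using alpha_nonvanishing_set[of 1] by (simp add: eval2_def)

lemma alpha_ess_eq_two: "alpha_ess = 2"
proof -
  have "alpha_ess = (SUP f \<in> {f :: rat poly poly. f \<noteq> 0}. 2)"
    unfolding alpha_ess_def by (rule SUP_cong) (simp_all add: alpha_nonvanishing_set)
  also have "\<dots> = 2" by (rule SUP_const) (use one_neq_zero in blast)
  finally show ?thesis .
qed

lemma not_locally_accumulating: "\<not> locally_accumulating Z"
proof
  assume Z: "locally_accumulating Z"
  have "zopen chart_pts"
    unfolding zopen_def zclosed_def by (auto intro!: exI[of _ "{1}"] simp: eval2_def)
  moreover have "Z \<subseteq> chart_pts"
    using Z unfolding locally_accumulating_def subvariety_def zclosed_def by blast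
  ultimately have "dense_open_in Z Z"
    unfolding dense_open_in_def by blast
  then have "alpha Z < alpha_ess" using Z unfolding locally_accumulating_def by blast
  then show False using two_le_alpha[of Z] alpha_ess_eq_two by simp
qed

theorem mainTheorem1:
  shows "alpha chart_pts = 2 \<and> alpha_ess = 2 \<and> \<not> (\<exists>Z. locally_accumulating Z)"
  using alpha_chart_pts alpha_ess_eq_two not_locally_accumulating by blast

end
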